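(* Let $H=(\mathcal{V},\mathcal{I})$ be an interval hypergraph, and let $H'=(\mathcal{V}',\mathcal{I}')$ be constructed from $H$ as follows: colour every point of $\mathcal{V}$ white; for every pair $I_i,I_j\in\mathcal{I}$ with $I_j\subseteq I_i$, colour every point of $I_i\setminus I_j$ black; assume every interval of $\mathcal{I}$ contains at least one white point; let $\mathcal{V}'$ be the set of white points and let $\mathcal{I}'$ consist of the sets $I\cap\mathcal{V}'$ for $I\in\mathcal{I}$ (keeping one copy among sets with equal endpoints). Then $H$ is exactly hittable if and only if $H'$ is exactly hittable.
   Context: An interval hypergraph has a finite linearly ordered vertex set (points on a line) and hyperedges that are intervals (sets of consecutive points). A hypergraph is exactly hittable if there is a set $S$ of vertices with $|S\cap I|=1$ for every hyperedge $I$. *)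

theory Defs
  imports Main
begin

definition is_interval :: "'a::linorder set \<Rightarrow> 'a set \<Rightarrow> bool" where
  "is_interval V I \<longleftrightarrow> I \<subseteq> V \<and> I \<noteq> {} \<and>
     (\<forall>x\<in>I. \<forall>z\<in>I. \<forall>y\<in>V. x \<le> y \<and> y \<le> z \<longrightarrow> y \<in> I)"

definition interval_hypergraph :: "'a::linorder set \<Rightarrow> 'a set set \<Rightarrow> bool" where
  "interval_hypergraph V E \<longleftrightarrow> finite V \<and> (\<forall>I\<in>E. is_interval V I)"

definition exactly_hittable :: "'a set \<Rightarrow> 'a set set \<Rightarrow> bool" where
  "exactly_hittable V E \<longleftrightarrow> (\<exists>S\<subseteq>V. \<forall>I\<in>E. card (S \<inter> I) = 1)"

definition black_points :: "'a set set \<Rightarrow> 'a set" where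
  "black_points E = (\<Union>I\<in>E. \<Union>J\<in>E. if J \<subseteq> I then I - J else {})"

definition white_points :: "'a set \<Rightarrow> 'a set set \<Rightarrow> 'a set" where
  "white_points V E = V - black_points E"

definition reduced_edges :: "'a set \<Rightarrow> 'a set set \<Rightarrow> 'a set set" where
  "reduced_edges V E = (\<lambda>I. I \<inter> white_points V E) ` E"

end

theory Submission
  imports Defs
begin

text \<open>If every hyperedge meets S exactly once and J \<subseteq> I, then the single point of S in J is also
  the single point of S in I, so S avoids I - J; hence an exact hitting set consists of white points.
  For a set S of white points, S \<inter> I = S \<inter> (I \<inter> white points), so S hits the original and the
  reduced hyperedges alike.\<close>

lemma exact_hit_nested_eq:
  assumes "card (S \<inter> I) = 1" "card (S \<inter> J) = 1" "J \<subseteq> I"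
  shows "S \<inter> J = S \<inter> I"
proof (rule card_subset_eq)
  show "finite (S \<inter> I)" using assms(1) by (metis card.infinite zero_neq_one)
  show "S \<inter> J \<subseteq> S \<inter> I" using assms(3) by blast
  show "card (S \<inter> J) = card (S \<inter> I)" using assms(1,2) by simp
qed

lemma exact_hit_disjoint_black_points:
  assumes "\<forall>I\<in>E. card (S \<inter> I) = 1"
  shows "S \<inter> black_points E = {}"
proof -
  have "S \<inter> (I - J) = {}" if "I \<in> E" "J \<in> E" "J \<subseteq> I" for I J
    using exact_hit_nested_eq[of S I J] assms that by blast
  then show ?thesis
    unfolding black_points_def by (auto split: if_splits)
qed

lemma exact_hit_restrict_edges_iff:
  assumes "S \<subseteq> W"
  shows "(\<forall>I'\<in>(\<lambda>I. I \<inter> W) ` E. card (S \<inter> I') = 1) \<longleftrightarrow> (\<forall>I\<in>E. card (S \<inter> I) = 1)"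
proof -
  have "S \<inter> (I \<inter> W) = S \<inter> I" for I using assms by blast
  then show ?thesis by simp
qed

theorem lemma11:
  fixes V :: "'a::linorder set" and E :: "'a set set"
  assumes "interval_hypergraph V E"
    and "\<forall>I\<in>E. I \<inter> white_points V E \<noteq> {}"
  shows "exactly_hittable V E \<longleftrightarrow>
         exactly_hittable (white_points V E) (reduced_edges V E)"
proof
  assume "exactly_hittable V E"
  then obtain S where S: "S \<subseteq> V" "\<forall>I\<in>E. card (S \<inter> I) = 1"
    unfolding exactly_hittable_def by blast
  then have "S \<subseteq> white_points V E"
    using exact_hit_disjoint_black_points unfolding white_points_def by blast
  with S(2) show "exactly_hittable (white_points V E) (reduced_edges V E)"
    unfolding exactly_hittable_def reduced_edges_def
    using exact_hit_restrict_edges_iff[of S "white_points V E" E] by auto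
next
  assume "exactly_hittable (white_points V E) (reduced_edges V E)"
  then obtain S where S: "S \<subseteq> white_points V E"
    "\<forall>I'\<in>reduced_edges V E. card (S \<inter> I') = 1"
    unfolding exactly_hittable_def by blast
  then have "\<forall>I\<in>E. card (S \<inter> I) = 1"
    unfolding reduced_edges_def using exact_hit_restrict_edges_iff[of S "white_points V E" E] by auto
  moreover have "S \<subseteq> V" using S(1) unfolding white_points_def by blast
  ultimately show "exactly_hittable V E" unfolding exactly_hittable_def by blast
qed

end
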